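(* If $\Theta\cdot\Gamma\vdash P$ and $\Gamma'\leqslant\Gamma$, then $\Theta\cdot\Gamma'\vdash P$.
   Context: Session types: $S::=B\mid T$ ($B$ basic types such as int, bool, unit, with a given subtyping $<:$); $T::=p\&_{i\in I}m_i(S_i).T_i\mid p\oplus_{i\in I}m_i(S_i).T_i\mid\mu t.T\mid t\mid\mathbf{end}$ (external/internal choice from/to role $p$ with $I\neq\emptyset$ and distinct labels; closed, guarded recursion; the distinguished label $\mathtt{crash}$ never in internal choice); $U::=T\mid\mathbf{stop}$. Subtyping $\leqslant$ is the largest relation with: $B\leqslant B'$ if $B<:B'$; $\mathbf{end}\leqslant\mathbf{end}$; $\mathbf{stop}\leqslant\mathbf{stop}$; $p\oplus_{i\in I\cup J}m_i(S_i).T_i\leqslant p\oplus_{i\in I}m_i(S'_i).T'_i$ if $S'_i\leqslant S_i$ and $T_i\leqslant T'_i$ for $i\in I$; $p\&_{i\in I}m_i(S_i).T_i\leqslant p\&_{i\in I\cup J}m_i(S'_i).T'_i$ if $S_i\leqslant S'_i$, $T_i\leqslant T'_i$ for $i\in I$, and ($|I|=1$ implies $m_i\neq\mathtt{crash}$ or $J=\emptyset$); $\mu t.T\leqslant T'$ if $T\{\mu t.T/t\}\leqslant T'$; $T\leqslant\mu t.T'$ if $T\leqslant T'\{\mu t.T'/t\}$. Processes: $c::=x\mid s[p]$, $d::=v\mid c$; $P::=\mathbf 0\mid(\nu s{:}\Gamma')P\mid P\mid P\mid c[q]\oplus m\langle d\rangle.P\mid c[q]\&_{i\in I}m_i(x_i).P_i\mid\mathbf{def}\,X(\tilde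 x{:}\tilde S)=P\,\mathbf{in}\,P\mid X\langle\tilde d\rangle\mid\mathbf{err}\mid s[p]^{\dagger}$ (crashed endpoint). Typing contexts: $\Gamma$ maps variables to $S$ and endpoints $s[p]$ to $U$; $\Theta$ maps process variables to type tuples; $\Gamma'\leqslant\Gamma$ iff $\mathrm{dom}(\Gamma')=\mathrm{dom}(\Gamma)$ and $\Gamma'(c)\leqslant\Gamma(c)$ for all $c$. Typing rules: $\Theta\vdash X{:}\tilde S$ if $\Theta(X)=\tilde S$; $\emptyset\vdash v{:}B$ if $v\in B$; $c{:}S\vdash c{:}S'$ if $S\leqslant S'$; $\mathrm{end}(c_1{:}S_1..c_n{:}S_n)$ iff each $S_i$ is basic or $S_i\leqslant\mathbf{end}$. $\mathrm{end}(\Gamma)\Rightarrow\Theta\cdot\Gamma\vdash\mathbf 0$; $\mathrm{end}(\Gamma)\Rightarrow\Theta\cdot\Gamma,s[p]{:}\mathbf{stop}\vdash s[p]^{\dagger}$; $\Theta\cdot\Gamma_1\vdash P_1,\ \Theta\cdot\Gamma_2\vdash P_2\Rightarrow\Theta\cdot\Gamma_1,\Gamma_2\vdash P_1\mid P_2$; $\Gamma_1\vdash c{:}q\oplus m(S).T$, $\Gamma_2\vdash d{:}S$, $S\not\leqslant\mathbf{end}$, $\Theta\cdot\Gamma,c{:}T\vdash P\Rightarrow\Theta\cdot\Gamma,\Gamma_1,\Gamma_2\vdash c[q]\oplus m\langle d\rangle.P$; $\Gamma_1\vdash c{:}q\&_{i\in I}m_i(S_i).T_i$, $\forall i\ \Theta\cdot\Gamma,y_i{:}S_i,c{:}T_i\vdash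 P_i\Rightarrow\Theta\cdot\Gamma,\Gamma_1\vdash c[q]\&_{i\in I}m_i(y_i).P_i$; $\Theta,X{:}\tilde S\cdot\tilde x{:}\tilde S\vdash P$ and $\Theta,X{:}\tilde S\cdot\Gamma\vdash Q\Rightarrow\Theta\cdot\Gamma\vdash\mathbf{def}\,X(\tilde x{:}\tilde S)=P\,\mathbf{in}\,Q$; $\Theta\vdash X{:}S_1..S_n$, $\mathrm{end}(\Gamma_0)$, $\Gamma_i\vdash d_i{:}S_i$, $S_i\not\leqslant\mathbf{end}$ $\Rightarrow\Theta\cdot\Gamma_0,\Gamma_1..\Gamma_n\vdash X\langle d_1..d_n\rangle$; if $\Gamma'=\{s[p]{:}T_p\}_{p\in I}$ satisfies a given safety predicate (an $(s;R)$-safety property, for some set of roles $R$), $s$ does not occur in $\Gamma$, and $\Theta\cdot\Gamma,\Gamma'\vdash P$, then $\Theta\cdot\Gamma\vdash(\nu s{:}\Gamma')P$. *)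

theory Defs
  imports Main
begin

type_synonym role = string
type_synonym label = string
type_synonym tvar = string
type_synonym var = string
type_synonym sess = string
type_synonym pvar = string

definition crash :: label where "crash = ''crash''"

text \<open>Raw syntax; well-formedness (closed, guarded, nonempty distinct choices,
  no crash label in internal choice, stop only at top level of U) is imposed below.
  'b is the type of basic types.\<close>

datatype 'b ty =
    TBase 'b
  | TExt role "(label \<times> 'b ty \<times> 'b ty) list"   (* p & m_i(S_i).T_i *)
  | TInt role "(label \<times> 'b ty \<times> 'b ty) list"   (* p (+) m_i(S_i).T_i *)
  | TMu tvar "'b ty"
  | TV tvar
  | TEnd
  | TStop

inductive free_in :: "tvar \<Rightarrow> 'b ty \<Rightarrow> bool" where
  "free_in t (TV t)"
| "free_in t T \<Longrightarrow> t \<noteq> t' \<Longrightarrow> free_in t (TMu t' T)"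
| "(m, S, T) \<in> set ts \<Longrightarrow> free_in t S \<Longrightarrow> free_in t (TExt p ts)"
| "(m, S, T) \<in> set ts \<Longrightarrow> free_in t T \<Longrightarrow> free_in t (TExt p ts)"
| "(m, S, T) \<in> set ts \<Longrightarrow> free_in t S \<Longrightarrow> free_in t (TInt p ts)"
| "(m, S, T) \<in> set ts \<Longrightarrow> free_in t T \<Longrightarrow> free_in t (TInt p ts)"

definition closed_ty :: "'b ty \<Rightarrow> bool" where
  "closed_ty T \<longleftrightarrow> (\<forall>t. \<not> free_in t T)"

inductive unguarded :: "tvar \<Rightarrow> 'b ty \<Rightarrow> bool" where
  "unguarded t (TV t)"
| "unguarded t T \<Longrightarrow> t \<noteq> t' \<Longrightarrow> unguarded t (TMu t' T)"

inductive is_sort :: "'b ty \<Rightarrow> bool" and is_sess :: "'b ty \<Rightarrow> bool" where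
  "is_sort (TBase b)"
| "is_sess T \<Longrightarrow> is_sort T"
| "is_sess TEnd"
| "is_sess (TV t)"
| "is_sess T \<Longrightarrow> \<not> unguarded t T \<Longrightarrow> is_sess (TMu t T)"
| "ts \<noteq> [] \<Longrightarrow> distinct (map fst ts) \<Longrightarrow>
   (\<forall>(m, S, T) \<in> set ts. is_sort S \<and> is_sess T) \<Longrightarrow> is_sess (TExt p ts)"
| "ts \<noteq> [] \<Longrightarrow> distinct (map fst ts) \<Longrightarrow> crash \<notin> fst ` set ts \<Longrightarrow>
   (\<forall>(m, S, T) \<in> set ts. is_sort S \<and> is_sess T) \<Longrightarrow> is_sess (TInt p ts)"

definition wf_sort :: "'b ty \<Rightarrow> bool" where
  "wf_sort S \<longleftrightarrow> is_sort S \<and> closed_ty S"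

definition wf_sess :: "'b ty \<Rightarrow> bool" where
  "wf_sess T \<longleftrightarrow> is_sess T \<and> closed_ty T"

definition wf_U :: "'b ty \<Rightarrow> bool" where
  "wf_U U \<longleftrightarrow> wf_sess U \<or> U = TStop"

text \<open>Substitution T{U/t}; only used with closed U, so no capture can occur.\<close>
primrec subst :: "tvar \<Rightarrow> 'b ty \<Rightarrow> 'b ty \<Rightarrow> 'b ty" where
  "subst t U (TBase b) = TBase b"
| "subst t U (TExt p ts) = TExt p (map (map_prod id (map_prod (subst t U) (subst t U))) ts)"
| "subst t U (TInt p ts) = TInt p (map (map_prod id (map_prod (subst t U) (subst t U))) ts)"
| "subst t U (TMu t' T) = (if t = t' then TMu t' T else TMu t' (subst t U T))"
| "subst t U (TV t') = (if t = t' then U else TV t')"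
| "subst t U TEnd = TEnd"
| "subst t U TStop = TStop"

coinductive subty :: "('b \<Rightarrow> 'b \<Rightarrow> bool) \<Rightarrow> 'b ty \<Rightarrow> 'b ty \<Rightarrow> bool"
  for bsub :: "'b \<Rightarrow> 'b \<Rightarrow> bool" where
  base: "bsub B B' \<Longrightarrow> subty bsub (TBase B) (TBase B')"
| "end": "subty bsub TEnd TEnd"
| stop: "subty bsub TStop TStop"
| int: "(\<forall>(m, S', T') \<in> set ys. \<exists>S T. (m, S, T) \<in> set xs \<and>
            subty bsub S' S \<and> subty bsub T T') \<Longrightarrow>
        subty bsub (TInt p xs) (TInt p ys)"
| ext: "(\<forall>(m, S, T) \<in> set xs. \<exists>S' T'. (m, S', T') \<in> set ys \<and>
            subty bsub S S' \<and> subty bsub T T') \<Longrightarrow>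
        (length xs = 1 \<and> fst (hd xs) = crash \<longrightarrow> fst ` set ys \<subseteq> fst ` set xs) \<Longrightarrow>
        subty bsub (TExt p xs) (TExt p ys)"
| muL: "subty bsub (subst t (TMu t T) T) T' \<Longrightarrow> subty bsub (TMu t T) T'"
| muR: "subty bsub T (subst t (TMu t T') T') \<Longrightarrow> subty bsub T (TMu t T')"

datatype chan = CVar var | CEp sess role

datatype 'v data = DVal 'v | DCh chan

datatype ('b, 'v) proc =
    PNil
  | Res sess "role \<Rightarrow> 'b ty option" "('b, 'v) proc"   (* (nu s:Gamma') P,  Gamma' = {s[p]:T_p} *)
  | Par "('b, 'v) proc" "('b, 'v) proc"
  | Send chan role label "'v data" "('b, 'v) proc"      (* c[q] (+) m<d>.P *)
  | Recv chan role "(label \<times> var \<times> ('b, 'v) proc) list" (* c[q] & m_i(x_i).P_i *)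
  | Def pvar "(var \<times> 'b ty) list" "('b, 'v) proc" "('b, 'v) proc"  (* def X(x:S) = P in Q *)
  | Call pvar "'v data list"
  | Err
  | Crashed sess role

type_synonym 'b ctx = "chan \<Rightarrow> 'b ty option"
type_synonym 'b pctx = "pvar \<Rightarrow> 'b ty list option"

inductive wf_proc :: "('b, 'v) proc \<Rightarrow> bool" where
  "wf_proc PNil"
| "finite (dom G) \<Longrightarrow> (\<forall>T \<in> ran G. wf_sess T) \<Longrightarrow> wf_proc P \<Longrightarrow> wf_proc (Res s G P)"
| "wf_proc P \<Longrightarrow> wf_proc Q \<Longrightarrow> wf_proc (Par P Q)"
| "wf_proc P \<Longrightarrow> wf_proc (Send c q m d P)"
| "bs \<noteq> [] \<Longrightarrow> distinct (map fst bs) \<Longrightarrow> (\<forall>(m, y, P) \<in> set bs. wf_proc P) \<Longrightarrow>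
   wf_proc (Recv c q bs)"
| "distinct (map fst xs) \<Longrightarrow> (\<forall>(x, S) \<in> set xs. wf_sort S) \<Longrightarrow> wf_proc P \<Longrightarrow> wf_proc Q \<Longrightarrow>
   wf_proc (Def X xs P Q)"
| "wf_proc (Call X ds)"
| "wf_proc Err"
| "wf_proc (Crashed s p)"

definition wf_ctx :: "'b ctx \<Rightarrow> bool" where
  "wf_ctx \<Gamma> \<longleftrightarrow> finite (dom \<Gamma>) \<and>
     (\<forall>x S. \<Gamma> (CVar x) = Some S \<longrightarrow> wf_sort S) \<and>
     (\<forall>s p U. \<Gamma> (CEp s p) = Some U \<longrightarrow> wf_U U)"

definition wf_pctx :: "'b pctx \<Rightarrow> bool" where
  "wf_pctx \<Theta> \<longleftrightarrow> (\<forall>X Ss. \<Theta> X = Some Ss \<longrightarrow> (\<forall>S \<in> set Ss. wf_sort S))"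

definition ctx_sub :: "('b \<Rightarrow> 'b \<Rightarrow> bool) \<Rightarrow> 'b ctx \<Rightarrow> 'b ctx \<Rightarrow> bool" where
  "ctx_sub bsub \<Gamma>' \<Gamma> \<longleftrightarrow> dom \<Gamma>' = dom \<Gamma> \<and>
     (\<forall>c S' S. \<Gamma>' c = Some S' \<longrightarrow> \<Gamma> c = Some S \<longrightarrow> subty bsub S' S)"

definition disj :: "'b ctx \<Rightarrow> 'b ctx \<Rightarrow> bool" where
  "disj G1 G2 \<longleftrightarrow> dom G1 \<inter> dom G2 = {}"

definition end_ctx :: "('b \<Rightarrow> 'b \<Rightarrow> bool) \<Rightarrow> 'b ctx \<Rightarrow> bool" where
  "end_ctx bsub \<Gamma> \<longleftrightarrow> (\<forall>c S. \<Gamma> c = Some S \<longrightarrow> (\<exists>B. S = TBase B) \<or> subty bsub S TEnd)"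

definition dtyp :: "('b \<Rightarrow> 'b \<Rightarrow> bool) \<Rightarrow> ('v \<Rightarrow> 'b \<Rightarrow> bool) \<Rightarrow> 'b ctx \<Rightarrow> 'v data \<Rightarrow> 'b ty \<Rightarrow> bool" where
  "dtyp bsub valty G d S \<longleftrightarrow>
     (case d of
        DVal v \<Rightarrow> G = Map.empty \<and> (\<exists>B. S = TBase B \<and> valty v B)
      | DCh c \<Rightarrow> (\<exists>S0. G = [c \<mapsto> S0] \<and> subty bsub S0 S))"

definition sctx :: "sess \<Rightarrow> (role \<Rightarrow> 'b ty option) \<Rightarrow> 'b ctx" where
  "sctx s G = (\<lambda>c. case c of CEp s' p \<Rightarrow> (if s' = s then G p else None) | CVar x \<Rightarrow> None)"

definition pairwise_disj :: "'b ctx list \<Rightarrow> bool" where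
  "pairwise_disj Gs \<longleftrightarrow> (\<forall>i j. i < length Gs \<longrightarrow> j < length Gs \<longrightarrow> i \<noteq> j \<longrightarrow> disj (Gs ! i) (Gs ! j))"

inductive typed :: "('b \<Rightarrow> 'b \<Rightarrow> bool) \<Rightarrow> ('v \<Rightarrow> 'b \<Rightarrow> bool) \<Rightarrow> (sess \<Rightarrow> 'b ctx \<Rightarrow> bool)
                  \<Rightarrow> 'b pctx \<Rightarrow> 'b ctx \<Rightarrow> ('b, 'v) proc \<Rightarrow> bool"
  for bsub :: "'b \<Rightarrow> 'b \<Rightarrow> bool" and valty :: "'v \<Rightarrow> 'b \<Rightarrow> bool"
  and safe :: "sess \<Rightarrow> 'b ctx \<Rightarrow> bool" where
  t_nil: "end_ctx bsub \<Gamma> \<Longrightarrow> typed bsub valty safe \<Theta> \<Gamma> PNil"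
| t_crashed: "end_ctx bsub \<Gamma> \<Longrightarrow> CEp s p \<notin> dom \<Gamma> \<Longrightarrow>
     typed bsub valty safe \<Theta> (\<Gamma>(CEp s p \<mapsto> TStop)) (Crashed s p)"
| t_par: "typed bsub valty safe \<Theta> G1 P1 \<Longrightarrow> typed bsub valty safe \<Theta> G2 P2 \<Longrightarrow> disj G1 G2 \<Longrightarrow>
     typed bsub valty safe \<Theta> (G1 ++ G2) (Par P1 P2)"
| t_send: "subty bsub S1 (TInt q [(m, S, T)]) \<Longrightarrow> wf_sess (TInt q [(m, S, T)]) \<Longrightarrow>
     dtyp bsub valty G2 d S \<Longrightarrow> \<not> subty bsub S TEnd \<Longrightarrow>
     disj \<Gamma> [c \<mapsto> S1] \<Longrightarrow> disj \<Gamma> G2 \<Longrightarrow> disj [c \<mapsto> S1] G2 \<Longrightarrow>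
     typed bsub valty safe \<Theta> (\<Gamma>(c \<mapsto> T)) P \<Longrightarrow>
     typed bsub valty safe \<Theta> (\<Gamma> ++ [c \<mapsto> S1] ++ G2) (Send c q m d P)"
| t_recv: "subty bsub S1 (TExt q ts) \<Longrightarrow> wf_sess (TExt q ts) \<Longrightarrow>
     fst ` set ts = fst ` set bs \<Longrightarrow> c \<notin> dom \<Gamma> \<Longrightarrow>
     (\<forall>(m, y, P) \<in> set bs. \<forall>S T. (m, S, T) \<in> set ts \<longrightarrow>
         CVar y \<notin> dom \<Gamma> \<and> CVar y \<noteq> c \<and>
         typed bsub valty safe \<Theta> (\<Gamma>(CVar y \<mapsto> S, c \<mapsto> T)) P) \<Longrightarrow>
     typed bsub valty safe \<Theta> (\<Gamma> ++ [c \<mapsto> S1]) (Recv c q bs)"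
| t_def: "X \<notin> dom \<Theta> \<Longrightarrow>
     typed bsub valty safe (\<Theta>(X \<mapsto> map snd xs)) (map_of (map (\<lambda>(x, S). (CVar x, S)) xs)) P \<Longrightarrow>
     typed bsub valty safe (\<Theta>(X \<mapsto> map snd xs)) \<Gamma> Q \<Longrightarrow>
     typed bsub valty safe \<Theta> \<Gamma> (Def X xs P Q)"
| t_call: "\<Theta> X = Some Ss \<Longrightarrow> length ds = length Ss \<Longrightarrow> length Gs = length Ss \<Longrightarrow>
     end_ctx bsub G0 \<Longrightarrow>
     (\<forall>i < length Ss. dtyp bsub valty (Gs ! i) (ds ! i) (Ss ! i) \<and> \<not> subty bsub (Ss ! i) TEnd) \<Longrightarrow>
     pairwise_disj (G0 # Gs) \<Longrightarrow>
     typed bsub valty safe \<Theta> (foldl (++) G0 Gs) (Call X ds)"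
| t_res: "safe s (sctx s G) \<Longrightarrow> (\<forall>p. CEp s p \<notin> dom \<Gamma>) \<Longrightarrow>
     typed bsub valty safe \<Theta> (\<Gamma> ++ sctx s G) P \<Longrightarrow>
     typed bsub valty safe \<Theta> \<Gamma> (Res s G P)"

end

theory Submission
  imports Defs
begin

text \<open>
  Whenever a rule splits its context
  into disjoint pieces, the smaller context \<open>\<Gamma>'\<close> splits the same way (restrict it to the
  domains of the pieces), so each premise can be narrowed separately. Continuation contexts are
  extended by the same types on both sides, which is harmless by reflexivity of subtyping; the
  type of the channel used by a prefix, of a sent channel and of a channel argument is absorbed
  by transitivity, e.g. \<open>S\<^sub>1' \<le> S\<^sub>1 \<le> q\<oplus>m(S).T\<close>; and \<open>end(\<Gamma>)\<close> is preserved since a well-formed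
  subtype of a basic type is basic, while subtypes of types below \<open>end\<close> stay below \<open>end\<close>
  by transitivity.

  Transitivity of the coinductively defined subtyping is the heart of the matter. For well-formed
  types it is proved coinductively: recursive types are unfolded to their head constructor, which
  terminates because recursion is guarded, after which the two derivations compose rule by rule.
  The only delicate case is a lone crash branch on the left, where distinctness of labels forces
  the middle type to be a lone crash branch as well.
\<close>

section \<open>Substitution and well-formed types\<close>

lemma ty_induct[case_names TBase TExt TInt TMu TV TEnd TStop]:
  assumes "\<And>b. P (TBase b)"
    and "\<And>p ts. (\<And>m S T. (m, S, T) \<in> set ts \<Longrightarrow> P S \<and> P T) \<Longrightarrow> P (TExt p ts)"
    and "\<And>p ts. (\<And>m S T. (m, S, T) \<in> set ts \<Longrightarrow> P S \<and> P T) \<Longrightarrow> P (TInt p ts)"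
    and "\<And>t T. P T \<Longrightarrow> P (TMu t T)"
    and "\<And>t. P (TV t)" and "P TEnd" and "P TStop"
  shows "P T"
proof (induction T rule: ty.induct)
  case (TExt p ts)
  show ?case
  proof (rule assms(2))
    fix m S T assume "(m, S, T) \<in> set ts"
    then show "P S \<and> P T" using TExt[of "(m, S, T)" "(S, T)"] by simp
  qed
next
  case (TInt p ts)
  show ?case
  proof (rule assms(3))
    fix m S T assume "(m, S, T) \<in> set ts"
    then show "P S \<and> P T" using TInt[of "(m, S, T)" "(S, T)"] by simp
  qed
qed (use assms in auto)

lemma free_in_subst:
  "free_in x (subst t U T) \<Longrightarrow> free_in x T \<and> x \<noteq> t \<or> free_in x U"
proof (induction T rule: ty_induct)
  case (TExt p ts)
  from TExt.prems obtain m S T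
    where "(m, S, T) \<in> set (map (map_prod id (map_prod (subst t U) (subst t U))) ts)"
      and "free_in x S \<or> free_in x T"
    by (auto elim: free_in.cases)
  with TExt.IH show ?case by (auto intro: free_in.intros)
next
  case (TInt p ts)
  from TInt.prems obtain m S T
    where "(m, S, T) \<in> set (map (map_prod id (map_prod (subst t U) (subst t U))) ts)"
      and "free_in x S \<or> free_in x T"
    by (auto elim: free_in.cases)
  with TInt.IH show ?case by (auto intro: free_in.intros)
qed (auto split: if_splits elim: free_in.cases intro: free_in.intros)

lemma closed_ty_unfold: "closed_ty (TMu t T) \<Longrightarrow> closed_ty (subst t (TMu t T) T)"
  unfolding closed_ty_def by (metis free_in.intros(2) free_in_subst)

lemma closed_ty_TExtD: "closed_ty (TExt p ts) \<Longrightarrow> (m, S, T) \<in> set ts \<Longrightarrow> closed_ty S \<and> closed_ty T"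
  unfolding closed_ty_def by (meson free_in.intros)

lemma closed_ty_TIntD: "closed_ty (TInt p ts) \<Longrightarrow> (m, S, T) \<in> set ts \<Longrightarrow> closed_ty S \<and> closed_ty T"
  unfolding closed_ty_def by (meson free_in.intros)

lemma unguarded_free_in: "unguarded t T \<Longrightarrow> free_in t T"
  by (induction rule: unguarded.induct) (auto intro: free_in.intros)

lemma unguarded_subst: "unguarded x (subst t U T) \<Longrightarrow> unguarded x T \<or> unguarded x U"
  by (induction T rule: ty_induct) (auto split: if_splits elim: unguarded.cases intro: unguarded.intros)

lemma is_sort_is_sess_subst:
  assumes "is_sess U" and "closed_ty U"
  shows "(is_sort S \<longrightarrow> is_sort (subst t U S)) \<and> (is_sess T \<longrightarrow> is_sess (subst t U T))"
proof (induction rule: is_sort_is_sess.induct)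
  case (5 T t')
  have "\<not> unguarded t' (subst t U T)" if "t \<noteq> t'"
    using unguarded_subst 5(2) assms(2) unguarded_free_in unfolding closed_ty_def by blast
  with 5 show ?case by (auto intro: is_sort_is_sess.intros)
next
  case (6 ts p)
  then show ?case
    by (auto intro!: is_sort_is_sess.intros(6) simp: comp_def case_prod_beta; force)
next
  case (7 ts p)
  then show ?case
    by (auto intro!: is_sort_is_sess.intros(7) simp: comp_def case_prod_beta image_image; force)
qed (use assms in \<open>auto intro: is_sort_is_sess.intros\<close>)

definition wf_ty :: "'b ty \<Rightarrow> bool" where
  "wf_ty T \<longleftrightarrow> (is_sort T \<or> T = TStop) \<and> closed_ty T"

lemma wf_sort_imp_wf_ty: "wf_sort T \<Longrightarrow> wf_ty T"
  unfolding wf_sort_def wf_ty_def by simp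

lemma wf_sess_imp_wf_ty: "wf_sess T \<Longrightarrow> wf_ty T"
  unfolding wf_sess_def wf_ty_def by (blast intro: is_sort_is_sess.intros)

lemma wf_ty_TStop: "wf_ty TStop"
  unfolding wf_ty_def closed_ty_def by (auto elim: free_in.cases)

lemma wf_U_imp_wf_ty: "wf_U T \<Longrightarrow> wf_ty T"
  unfolding wf_U_def using wf_sess_imp_wf_ty wf_ty_TStop by blast

lemma wf_ty_TEnd: "wf_ty TEnd"
  unfolding wf_ty_def closed_ty_def by (auto intro: is_sort_is_sess.intros elim: free_in.cases)

fun is_mu :: "'b ty \<Rightarrow> bool" where
  "is_mu (TMu t T) = True"
| "is_mu _ = False"

fun mu_depth :: "'b ty \<Rightarrow> nat" where
  "mu_depth (TMu t T) = Suc (mu_depth T)"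
| "mu_depth _ = 0"

lemma mu_depth_subst: "\<not> unguarded t T \<Longrightarrow> mu_depth (subst t U T) = mu_depth T"
  by (induction T rule: ty_induct) (auto intro: unguarded.intros)

lemma wf_ty_TMuD:
  "wf_ty (TMu t T) \<Longrightarrow> is_sess (TMu t T) \<and> is_sess T \<and> \<not> unguarded t T \<and> closed_ty (TMu t T)"
  unfolding wf_ty_def by (auto elim: is_sort.cases is_sess.cases)

lemma wf_ty_unfold:
  assumes "wf_ty (TMu t T)"
  shows "wf_ty (subst t (TMu t T) T)" and "is_sess (subst t (TMu t T) T)"
proof -
  show "is_sess (subst t (TMu t T) T)"
    using is_sort_is_sess_subst wf_ty_TMuD[OF assms] by blast
  then show "wf_ty (subst t (TMu t T) T)"
    using closed_ty_unfold wf_ty_TMuD[OF assms] unfolding wf_ty_def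
    by (auto intro: is_sort_is_sess.intros)
qed

lemma is_sort_TIntD:
  assumes "is_sort (TInt p ts)" and "(m, S, T) \<in> set ts"
  shows "is_sort S \<and> is_sess T"
proof -
  have "is_sess (TInt p ts)" using assms(1) by (cases rule: is_sort.cases) auto
  then show ?thesis using assms(2) by (cases rule: is_sess.cases) auto
qed

lemma is_sort_TExtD:
  assumes "is_sort (TExt p ts)" and "(m, S, T) \<in> set ts"
  shows "is_sort S \<and> is_sess T"
proof -
  have "is_sess (TExt p ts)" using assms(1) by (cases rule: is_sort.cases) auto
  then show ?thesis using assms(2) by (cases rule: is_sess.cases) auto
qed

lemma wf_ty_TIntD: "wf_ty (TInt p ts) \<Longrightarrow> (m, S, T) \<in> set ts \<Longrightarrow> wf_ty S \<and> wf_ty T"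
  unfolding wf_ty_def
  by (auto dest: closed_ty_TIntD is_sort_TIntD intro: is_sort_is_sess.intros)

lemma wf_ty_TExtD: "wf_ty (TExt p ts) \<Longrightarrow> (m, S, T) \<in> set ts \<Longrightarrow> wf_ty S \<and> wf_ty T"
  unfolding wf_ty_def
  by (auto dest: closed_ty_TExtD is_sort_TExtD intro: is_sort_is_sess.intros)

lemma wf_ty_TExt_distinct: "wf_ty (TExt p ts) \<Longrightarrow> distinct (map fst ts)"
  unfolding wf_ty_def by (auto elim: is_sort.cases is_sess.cases)

lemma not_is_sess_TBase: "\<not> is_sess (TBase b)"
  by (auto elim: is_sess.cases)

lemma not_is_sess_TStop: "\<not> is_sess TStop"
  by (auto elim: is_sess.cases)

section \<open>Unfolding recursive types\<close>

inductive unfolds_to :: "'b ty \<Rightarrow> 'b ty \<Rightarrow> bool" where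
  refl: "\<not> is_mu T \<Longrightarrow> unfolds_to T T"
| mu: "unfolds_to (subst t (TMu t T) T) N \<Longrightarrow> unfolds_to (TMu t T) N"

inductive_cases unfolds_to_TMuE: "unfolds_to (TMu t T) N"

lemma unfolds_to_not_mu: "unfolds_to T N \<Longrightarrow> \<not> is_mu N"
  by (induction rule: unfolds_to.induct) auto

lemma unfolds_to_exists:
  "wf_ty T \<Longrightarrow> \<exists>N. unfolds_to T N \<and> wf_ty N \<and> (is_sess T \<longrightarrow> is_sess N)"
proof (induction "mu_depth T" arbitrary: T rule: less_induct)
  case less
  show ?case
  proof (cases "is_mu T")
    case True
    then obtain t U where T: "T = TMu t U" by (cases T) auto
    have "mu_depth (subst t T U) < mu_depth T"
      using mu_depth_subst wf_ty_TMuD less.prems T by fastforce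
    then obtain N where "unfolds_to (subst t T U) N" "wf_ty N" "is_sess N"
      using less wf_ty_unfold T by metis
    then show ?thesis using T unfolds_to.mu by blast
  qed (use less.prems unfolds_to.refl in blast)
qed

lemma subty_unfolds_to:
  "unfolds_to A NA \<Longrightarrow> unfolds_to B NB \<Longrightarrow> subty bsub A B \<Longrightarrow> subty bsub NA NB"
proof (induction arbitrary: B NB rule: unfolds_to.induct)
  case (refl A)
  from refl.prems refl.hyps show ?case
    by (induction rule: unfolds_to.induct) (auto elim: subty.cases)
next
  case (mu t T NA)
  note unfold_left = mu.IH
  from mu.prems show ?case
  proof (induction rule: unfolds_to.induct)
    case (refl B)
    from refl.prems have "subty bsub (subst t (TMu t T) T) B"
      by (cases rule: subty.cases) (use refl.hyps in auto)
    then show ?case using unfold_left unfolds_to.refl[OF refl.hyps] by blast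
  next
    case (mu t' T' NB)
    from mu.prems show ?case
    proof (cases rule: subty.cases)
      case muL
      then show ?thesis using unfold_left unfolds_to.mu[OF mu.hyps] by blast
    next
      case muR
      then show ?thesis using mu.IH by blast
    qed
  qed
qed

lemma subty_unfolds_to_left: "unfolds_to A NA \<Longrightarrow> subty bsub NA B \<Longrightarrow> subty bsub A B"
  by (induction rule: unfolds_to.induct) (auto intro: subty.muL)

lemma subty_unfolds_to_right: "unfolds_to B NB \<Longrightarrow> subty bsub A NB \<Longrightarrow> subty bsub A B"
  by (induction rule: unfolds_to.induct) (auto intro: subty.muR)

lemma subty_unfold_left:
  assumes "subty bsub (TMu t T) B" and "wf_ty (TMu t T)" and "wf_ty B"
  shows "subty bsub (subst t (TMu t T) T) B"
proof -
  obtain NA NB where A: "unfolds_to (TMu t T) NA" and B: "unfolds_to B NB"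
    using unfolds_to_exists assms(2,3) by blast
  from A have A': "unfolds_to (subst t (TMu t T) T) NA" by (rule unfolds_to_TMuE)
  show ?thesis
    using subty_unfolds_to[OF A B assms(1)] subty_unfolds_to_left[OF A'] subty_unfolds_to_right[OF B]
    by blast
qed

lemma subty_unfold_right:
  assumes "subty bsub A (TMu t T)" and "wf_ty A" and "wf_ty (TMu t T)"
  shows "subty bsub A (subst t (TMu t T) T)"
proof -
  obtain NA NB where A: "unfolds_to A NA" and B: "unfolds_to (TMu t T) NB"
    using unfolds_to_exists assms(2,3) by blast
  from B have B': "unfolds_to (subst t (TMu t T) T) NB" by (rule unfolds_to_TMuE)
  show ?thesis
    using subty_unfolds_to[OF A B assms(1)] subty_unfolds_to_left[OF A] subty_unfolds_to_right[OF B']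
    by blast
qed

lemma subty_mu_imp_sess_head:
  assumes "wf_ty S" and "is_mu S" and "subty bsub S T" and "\<not> is_mu T"
  obtains N where "is_sess N" and "\<not> is_mu N" and "subty bsub N T"
proof -
  from assms(2) obtain t U where S: "S = TMu t U" by (cases S) auto
  obtain N where N: "unfolds_to S N" "is_sess N"
    using unfolds_to_exists assms(1) wf_ty_TMuD unfolding S by blast
  show ?thesis
    using that N(2) unfolds_to_not_mu[OF N(1)] subty_unfolds_to[OF N(1) unfolds_to.refl[OF assms(4)] assms(3)]
    by blast
qed

section \<open>Reflexivity and transitivity of subtyping\<close>

(* The rules of subty with each coinductive premise replaced by R, so that a coinductive
   proof can name the rule it applies. *)
inductive subty_step :: "('b \<Rightarrow> 'b \<Rightarrow> bool) \<Rightarrow> ('b ty \<Rightarrow> 'b ty \<Rightarrow> bool) \<Rightarrow> 'b ty \<Rightarrow> 'b ty \<Rightarrow> bool"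
  for bsub :: "'b \<Rightarrow> 'b \<Rightarrow> bool" and R :: "'b ty \<Rightarrow> 'b ty \<Rightarrow> bool" where
  base: "bsub B B' \<Longrightarrow> subty_step bsub R (TBase B) (TBase B')"
| "end": "subty_step bsub R TEnd TEnd"
| stop: "subty_step bsub R TStop TStop"
| int: "(\<forall>(m, S', T') \<in> set ys. \<exists>S T. (m, S, T) \<in> set xs \<and> R S' S \<and> R T T') \<Longrightarrow>
        subty_step bsub R (TInt p xs) (TInt p ys)"
| ext: "(\<forall>(m, S, T) \<in> set xs. \<exists>S' T'. (m, S', T') \<in> set ys \<and> R S S' \<and> R T T') \<Longrightarrow>
        (length xs = 1 \<and> fst (hd xs) = crash \<longrightarrow> fst ` set ys \<subseteq> fst ` set xs) \<Longrightarrow>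
        subty_step bsub R (TExt p xs) (TExt p ys)"
| muL: "R (subst t (TMu t T) T) T' \<Longrightarrow> subty_step bsub R (TMu t T) T'"
| muR: "R T (subst t (TMu t T') T') \<Longrightarrow> subty_step bsub R T (TMu t T')"

lemma subty_coinduct_step:
  assumes "X A B" and "\<And>A B. X A B \<Longrightarrow> subty_step bsub X A B"
  shows "subty bsub A B"
  using assms(1)
proof (coinduction arbitrary: A B rule: subty.coinduct)
  case (subty A B)
  from assms(2)[OF this] show ?case by cases fastforce+
qed

lemma subty_refl:
  fixes bsub :: "'b \<Rightarrow> 'b \<Rightarrow> bool"
  assumes "reflp bsub" and "closed_ty T"
  shows "subty bsub T T"
proof -
  \<comment> \<open>A recursive type is related to its unfolding, which is then related to itself;
    so unguarded recursion needs no special treatment.\<close>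
  define R :: "'b ty \<Rightarrow> 'b ty \<Rightarrow> bool"
    where "R A B \<longleftrightarrow> closed_ty A \<and> (B = A \<or> (\<exists>t U. A = TMu t U \<and> B = subst t A U))" for A B
  have "R T T" using assms(2) by (simp add: R_def)
  then show ?thesis
  proof (rule subty_coinduct_step[of R])
    fix A B assume "R A B"
    then have "closed_ty A" by (simp add: R_def)
    from \<open>R A B\<close> consider "B = A" | t U where "A = TMu t U" "B = subst t A U"
      by (auto simp: R_def)
    then show "subty_step bsub R A B"
    proof cases
      case 1
      show ?thesis
      proof (cases A)
        case (TBase b)
        then show ?thesis using 1 assms(1) by (simp add: reflp_def subty_step.base)
      next
        case (TExt p ts)
        show ?thesis using \<open>closed_ty A\<close> unfolding 1 TExt
          by (intro subty_step.ext) (auto simp: R_def dest: closed_ty_TExtD)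
      next
        case (TInt p ts)
        show ?thesis using \<open>closed_ty A\<close> unfolding 1 TInt
          by (intro subty_step.int) (auto simp: R_def dest: closed_ty_TIntD)
      next
        case (TMu t U)
        show ?thesis using \<open>closed_ty A\<close> unfolding 1 TMu
          by (intro subty_step.muR) (simp add: R_def)
      next
        case (TV t)
        then show ?thesis using \<open>closed_ty A\<close> unfolding closed_ty_def by (blast intro: free_in.intros)
      qed (use 1 in \<open>auto intro: subty_step.intros\<close>)
    next
      case 2
      show ?thesis using \<open>closed_ty A\<close> unfolding 2
        by (intro subty_step.muL) (simp add: R_def closed_ty_unfold)
    qed
  qed
qed

definition subty_chain :: "('b \<Rightarrow> 'b \<Rightarrow> bool) \<Rightarrow> 'b ty \<Rightarrow> 'b ty \<Rightarrow> bool" where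
  "subty_chain bsub A C \<longleftrightarrow>
     (\<exists>B. wf_ty A \<and> wf_ty B \<and> wf_ty C \<and> subty bsub A B \<and> subty bsub B C)"

lemma subty_chain_step_TInt:
  assumes "wf_ty (TInt p xs)" and "wf_ty (TInt p ys)" and "wf_ty (TInt p zs)"
    and "subty bsub (TInt p xs) (TInt p ys)" and "subty bsub (TInt p ys) (TInt p zs)"
  shows "subty_step bsub (subty_chain bsub) (TInt p xs) (TInt p zs)"
proof -
  from assms(4) have xy: "\<forall>(m, S', T') \<in> set ys. \<exists>S T. (m, S, T) \<in> set xs \<and>
      subty bsub S' S \<and> subty bsub T T'"
    by (cases rule: subty.cases) auto
  from assms(5) have yz: "\<forall>(m, S'', T'') \<in> set zs. \<exists>S' T'. (m, S', T') \<in> set ys \<and>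
      subty bsub S'' S' \<and> subty bsub T' T''"
    by (cases rule: subty.cases) auto
  have "\<exists>S T. (m, S, T) \<in> set xs \<and> subty_chain bsub S'' S \<and> subty_chain bsub T T''"
    if mz: "(m, S'', T'') \<in> set zs" for m S'' T''
  proof -
    obtain S' T' where my: "(m, S', T') \<in> set ys" "subty bsub S'' S'" "subty bsub T' T''"
      using bspec[OF yz mz] by auto
    obtain S T where mx: "(m, S, T) \<in> set xs" "subty bsub S' S" "subty bsub T T'"
      using bspec[OF xy my(1)] by auto
    have "wf_ty S'' \<and> wf_ty T''" "wf_ty S' \<and> wf_ty T'" "wf_ty S \<and> wf_ty T"
      using wf_ty_TIntD assms(1-3) mz my(1) mx(1) by blast+
    then show ?thesis using my mx unfolding subty_chain_def by blast
  qed
  then show ?thesis by (intro subty_step.int) blast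
qed

lemma distinct_map_fst_singleton:
  assumes "distinct (map fst xs)" and "fst ` set xs = {m}"
  shows "length xs = 1" and "fst (hd xs) = m"
proof -
  show "length xs = 1" using distinct_card[OF assms(1)] assms(2) by simp
  then show "fst (hd xs) = m" using assms(2) by (cases xs) auto
qed

lemma subty_chain_step_TExt:
  assumes "wf_ty (TExt p xs)" and "wf_ty (TExt p ys)" and "wf_ty (TExt p zs)"
    and "subty bsub (TExt p xs) (TExt p ys)" and "subty bsub (TExt p ys) (TExt p zs)"
  shows "subty_step bsub (subty_chain bsub) (TExt p xs) (TExt p zs)"
proof -
  from assms(4) have xy: "\<forall>(m, S, T) \<in> set xs. \<exists>S' T'. (m, S', T') \<in> set ys \<and>
      subty bsub S S' \<and> subty bsub T T'"
    and crash_xy: "length xs = 1 \<and> fst (hd xs) = crash \<longrightarrow> fst ` set ys \<subseteq> fst ` set xs"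
    by (cases rule: subty.cases; simp)+
  from assms(5) have yz: "\<forall>(m, S', T') \<in> set ys. \<exists>S'' T''. (m, S'', T'') \<in> set zs \<and>
      subty bsub S' S'' \<and> subty bsub T' T''"
    and crash_yz: "length ys = 1 \<and> fst (hd ys) = crash \<longrightarrow> fst ` set zs \<subseteq> fst ` set ys"
    by (cases rule: subty.cases; simp)+
  have "\<exists>S'' T''. (m, S'', T'') \<in> set zs \<and> subty_chain bsub S S'' \<and> subty_chain bsub T T''"
    if mx: "(m, S, T) \<in> set xs" for m S T
  proof -
    obtain S' T' where my: "(m, S', T') \<in> set ys" "subty bsub S S'" "subty bsub T T'"
      using bspec[OF xy mx] by auto
    obtain S'' T'' where mz: "(m, S'', T'') \<in> set zs" "subty bsub S' S''" "subty bsub T' T''"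
      using bspec[OF yz my(1)] by auto
    have "wf_ty S \<and> wf_ty T" "wf_ty S' \<and> wf_ty T'" "wf_ty S'' \<and> wf_ty T''"
      using wf_ty_TExtD assms(1-3) mx my(1) mz(1) by blast+
    then show ?thesis using my mz unfolding subty_chain_def by blast
  qed
  moreover have "fst ` set zs \<subseteq> fst ` set xs" if crash_xs: "length xs = 1" "fst (hd xs) = crash"
  proof -
    obtain S T where xs: "xs = [(crash, S, T)]"
      using crash_xs by (cases xs) (auto simp: length_Suc_conv)
    then have ys: "fst ` set ys = {crash}" using xy crash_xy by force
    moreover have "distinct (map fst ys)" using wf_ty_TExt_distinct assms(2) .
    ultimately show ?thesis using distinct_map_fst_singleton crash_yz xs by fastforce
  qed
  ultimately show ?thesis by (intro subty_step.ext) blast+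
qed

lemma subty_chain_step_head:
  assumes "transp bsub" and "\<not> is_mu A" "\<not> is_mu B" "\<not> is_mu C"
    and "wf_ty A" "wf_ty B" "wf_ty C" and AB: "subty bsub A B" and BC: "subty bsub B C"
  shows "subty_step bsub (subty_chain bsub) A C"
  using AB
proof (cases rule: subty.cases)
  case (base b1 b2)
  with BC assms(4) obtain b3 where "C = TBase b3" "bsub b2 b3" by (auto elim: subty.cases)
  then show ?thesis using base assms(1) by (metis subty_step.base transpD)
next
  case "end"
  with BC assms(4) have "C = TEnd" by (auto elim: subty.cases)
  then show ?thesis using "end" subty_step.end by simp
next
  case stop
  with BC assms(4) have "C = TStop" by (auto elim: subty.cases)
  then show ?thesis using stop subty_step.stop by simp
next
  case (int ys xs p)
  moreover obtain zs where "C = TInt p zs"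
    using BC assms(4) int(2) by (cases rule: subty.cases) auto
  ultimately show ?thesis using subty_chain_step_TInt[of p xs ys zs bsub] assms(5-7) AB BC by simp
next
  case (ext xs ys p)
  moreover obtain zs where "C = TExt p zs"
    using BC assms(4) ext(2) by (cases rule: subty.cases) auto
  ultimately show ?thesis using subty_chain_step_TExt[of p xs ys zs bsub] assms(5-7) AB BC by simp
qed (use assms(2,3) in auto)

(* Well-formedness, and with it guardedness, of the middle type is essential: the unguarded
   type TMu t (TV t) is a supertype of TEnd and a subtype of TStop. *)
theorem subty_trans:
  assumes "transp bsub" and "wf_ty A" "wf_ty B" "wf_ty C"
    and "subty bsub A B" "subty bsub B C"
  shows "subty bsub A C"
proof -
  have "subty_chain bsub A C" using assms(2-) unfolding subty_chain_def by blast
  then show ?thesis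
  proof (rule subty_coinduct_step[of "subty_chain bsub"])
    fix A C assume "subty_chain bsub A C"
    then obtain B where wf: "wf_ty A" "wf_ty B" "wf_ty C"
      and AB: "subty bsub A B" and BC: "subty bsub B C"
      unfolding subty_chain_def by blast
    show "subty_step bsub (subty_chain bsub) A C"
    proof (cases "is_mu A")
      case True
      then obtain t T where A: "A = TMu t T" by (cases A) auto
      have "subty bsub (subst t A T) B" using subty_unfold_left AB wf unfolding A by blast
      then show ?thesis
        using wf_ty_unfold wf BC unfolding A subty_chain_def by (intro subty_step.muL) blast
    next
      case A_head: False
      show ?thesis
      proof (cases "is_mu C")
        case True
        then obtain t T where C: "C = TMu t T" by (cases C) auto
        have "subty bsub B (subst t C T)" using subty_unfold_right BC wf unfolding C by blast
        then show ?thesis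
          using wf_ty_unfold wf AB unfolding C subty_chain_def by (intro subty_step.muR) blast
      next
        case C_head: False
        obtain NB where B: "unfolds_to B NB" and "wf_ty NB"
          using unfolds_to_exists wf(2) by blast
        have "subty bsub A NB" using subty_unfolds_to[OF unfolds_to.refl[OF A_head] B AB] .
        moreover have "subty bsub NB C" using subty_unfolds_to[OF B unfolds_to.refl[OF C_head] BC] .
        ultimately show ?thesis
          using subty_chain_step_head assms(1) A_head C_head unfolds_to_not_mu[OF B]
            wf \<open>wf_ty NB\<close> by blast
      qed
    qed
  qed
qed

lemma subty_TBaseD:
  assumes "wf_ty S" and "subty bsub S (TBase b)"
  shows "\<exists>b'. S = TBase b'"
proof (cases "is_mu S")
  case True
  then obtain N where "is_sess N" "\<not> is_mu N" "subty bsub N (TBase b)"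
    using subty_mu_imp_sess_head[OF assms(1) _ assms(2)] by auto
  from \<open>subty bsub N (TBase b)\<close> show ?thesis
    by (cases rule: subty.cases) (use \<open>is_sess N\<close> \<open>\<not> is_mu N\<close> in \<open>auto simp: not_is_sess_TBase\<close>)
qed (use assms(2) in \<open>cases rule: subty.cases; simp\<close>)

lemma subty_TStopD:
  assumes "wf_ty S" and "subty bsub S TStop"
  shows "S = TStop"
proof (cases "is_mu S")
  case True
  then obtain N where "is_sess N" "\<not> is_mu N" "subty bsub N TStop"
    using subty_mu_imp_sess_head[OF assms(1) _ assms(2)] by auto
  from \<open>subty bsub N TStop\<close> show ?thesis
    by (cases rule: subty.cases) (use \<open>is_sess N\<close> \<open>\<not> is_mu N\<close> in \<open>auto simp: not_is_sess_TStop\<close>)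
qed (use assms(2) in \<open>cases rule: subty.cases; simp\<close>)

definition wf_ty_ctx :: "'b ctx \<Rightarrow> bool" where
  "wf_ty_ctx \<Gamma> \<longleftrightarrow> (\<forall>c S. \<Gamma> c = Some S \<longrightarrow> wf_ty S)"

lemma wf_ctx_imp_wf_ty_ctx: "wf_ctx \<Gamma> \<Longrightarrow> wf_ty_ctx \<Gamma>"
  unfolding wf_ctx_def wf_ty_ctx_def
  by (metis chan.exhaust wf_U_imp_wf_ty wf_sort_imp_wf_ty)

lemma wf_ty_ctx_map_le: "H \<subseteq>\<^sub>m \<Gamma> \<Longrightarrow> wf_ty_ctx \<Gamma> \<Longrightarrow> wf_ty_ctx H"
  unfolding wf_ty_ctx_def map_le_def by (metis domI)

lemma wf_ty_ctx_upd: "wf_ty_ctx \<Gamma> \<Longrightarrow> wf_ty S \<Longrightarrow> wf_ty_ctx (\<Gamma>(c \<mapsto> S))"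
  unfolding wf_ty_ctx_def by simp

lemma wf_ty_ctx_map_add: "wf_ty_ctx \<Gamma> \<Longrightarrow> wf_ty_ctx D \<Longrightarrow> wf_ty_ctx (\<Gamma> ++ D)"
  unfolding wf_ty_ctx_def by (auto split: option.splits)

lemma ctx_sub_dom: "ctx_sub bsub \<Gamma>' \<Gamma> \<Longrightarrow> dom \<Gamma>' = dom \<Gamma>"
  unfolding ctx_sub_def by blast

lemma ctx_sub_upd:
  "ctx_sub bsub \<Gamma>' \<Gamma> \<Longrightarrow> subty bsub S' S \<Longrightarrow> ctx_sub bsub (\<Gamma>'(c \<mapsto> S')) (\<Gamma>(c \<mapsto> S))"
  unfolding ctx_sub_def by auto

lemma ctx_sub_map_add:
  assumes "ctx_sub bsub \<Gamma>' \<Gamma>" and "ctx_sub bsub D' D"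
  shows "ctx_sub bsub (\<Gamma>' ++ D') (\<Gamma> ++ D)"
  using assms unfolding ctx_sub_def by (auto simp: map_add_def split: option.splits) blast+

lemma ctx_sub_refl: "reflp bsub \<Longrightarrow> wf_ty_ctx \<Gamma> \<Longrightarrow> ctx_sub bsub \<Gamma> \<Gamma>"
  unfolding ctx_sub_def wf_ty_ctx_def wf_ty_def using subty_refl by auto

lemma ctx_sub_singleton: "ctx_sub bsub \<Gamma>' [c \<mapsto> S] \<Longrightarrow> \<exists>S'. \<Gamma>' = [c \<mapsto> S'] \<and> subty bsub S' S"
  unfolding ctx_sub_def
  by (metis (full_types) dom_eq_singleton_conv fun_upd_same)

lemma ctx_sub_empty: "ctx_sub bsub \<Gamma>' Map.empty \<Longrightarrow> \<Gamma>' = Map.empty"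
  unfolding ctx_sub_def by auto

lemma ctx_sub_restrict:
  assumes "ctx_sub bsub \<Gamma>' \<Gamma>" and "G \<subseteq>\<^sub>m \<Gamma>"
  shows "ctx_sub bsub (\<Gamma>' |` dom G) G"
proof -
  have "dom (\<Gamma>' |` dom G) = dom G"
    using map_le_implies_dom_le[OF assms(2)] ctx_sub_dom[OF assms(1)] by auto
  moreover have "\<Gamma> c = Some S" if "G c = Some S" for c S
    using assms(2) that unfolding map_le_def by (metis domI)
  ultimately show ?thesis using assms(1) unfolding ctx_sub_def
    by (auto simp: restrict_map_def split: if_splits)
qed

lemma disj_map_le_map_add: "disj G1 G2 \<Longrightarrow> G1 \<subseteq>\<^sub>m G1 ++ G2"
  unfolding disj_def by (metis map_add_comm map_le_map_add)

(* The context on the right must be well formed too, since its types are the middle types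
   in the uses of subty_trans. *)
definition wf_ctx_sub :: "('b \<Rightarrow> 'b \<Rightarrow> bool) \<Rightarrow> 'b ctx \<Rightarrow> 'b ctx \<Rightarrow> bool" where
  "wf_ctx_sub bsub \<Gamma>' \<Gamma> \<longleftrightarrow> ctx_sub bsub \<Gamma>' \<Gamma> \<and> wf_ty_ctx \<Gamma>' \<and> wf_ty_ctx \<Gamma>"

lemma wf_ctx_sub_map_add_split:
  assumes "wf_ctx_sub bsub \<Gamma>' (G1 ++ G2)" and "disj G1 G2"
  obtains H1 H2 where "\<Gamma>' = H1 ++ H2" and "wf_ctx_sub bsub H1 G1" and "wf_ctx_sub bsub H2 G2"
proof
  have G: "G1 \<subseteq>\<^sub>m G1 ++ G2" "G2 \<subseteq>\<^sub>m G1 ++ G2"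
    using disj_map_le_map_add[OF assms(2)] map_le_map_add by blast+
  have H: "\<Gamma>' |` A \<subseteq>\<^sub>m \<Gamma>'" for A by (auto simp: map_le_def)
  show "wf_ctx_sub bsub (\<Gamma>' |` dom G1) G1" "wf_ctx_sub bsub (\<Gamma>' |` dom G2) G2"
    using assms(1) ctx_sub_restrict G wf_ty_ctx_map_le[OF H] wf_ty_ctx_map_le[OF G(1)]
      wf_ty_ctx_map_le[OF G(2)]
    unfolding wf_ctx_sub_def by blast+
  have "ctx_sub bsub \<Gamma>' (G1 ++ G2)" using assms(1) unfolding wf_ctx_sub_def by simp
  from ctx_sub_dom[OF this] have "dom \<Gamma>' = dom G1 \<union> dom G2" by auto
  then show "\<Gamma>' = \<Gamma>' |` dom G1 ++ \<Gamma>' |` dom G2"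
    by (force simp: fun_eq_iff map_add_def restrict_map_def split: option.splits)
qed

lemma wf_ctx_sub_extend_split:
  assumes "wf_ctx_sub bsub \<Gamma>' (\<Gamma> ++ [c \<mapsto> S])" and "c \<notin> dom \<Gamma>"
  obtains H S' where "\<Gamma>' = H ++ [c \<mapsto> S']" and "wf_ctx_sub bsub H \<Gamma>"
    and "subty bsub S' S" and "wf_ty S'" and "wf_ty S"
proof -
  have "disj \<Gamma> [c \<mapsto> S]" using assms(2) unfolding disj_def by simp
  with assms(1) obtain H C where "\<Gamma>' = H ++ C" "wf_ctx_sub bsub H \<Gamma>" "wf_ctx_sub bsub C [c \<mapsto> S]"
    by (rule wf_ctx_sub_map_add_split)
  moreover obtain S' where "C = [c \<mapsto> S']" "subty bsub S' S"
    using ctx_sub_singleton \<open>wf_ctx_sub bsub C [c \<mapsto> S]\<close> unfolding wf_ctx_sub_def by blast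
  moreover have "wf_ty S'" "wf_ty S"
    using \<open>wf_ctx_sub bsub C [c \<mapsto> S]\<close> \<open>C = [c \<mapsto> S']\<close> unfolding wf_ctx_sub_def wf_ty_ctx_def by simp_all
  ultimately show ?thesis using that by blast
qed

lemma wf_ctx_sub_upd:
  assumes "reflp bsub" and "wf_ctx_sub bsub \<Gamma>' \<Gamma>" and "wf_ty T"
  shows "wf_ctx_sub bsub (\<Gamma>'(c \<mapsto> T)) (\<Gamma>(c \<mapsto> T))"
  using assms ctx_sub_upd subty_refl wf_ty_ctx_upd unfolding wf_ctx_sub_def wf_ty_def by metis

lemma wf_ctx_sub_map_add_right:
  assumes "reflp bsub" and "wf_ctx_sub bsub \<Gamma>' \<Gamma>" and "wf_ty_ctx D"
  shows "wf_ctx_sub bsub (\<Gamma>' ++ D) (\<Gamma> ++ D)"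
  using assms ctx_sub_map_add ctx_sub_refl wf_ty_ctx_map_add unfolding wf_ctx_sub_def by metis

lemma pairwise_disj_Cons:
  "pairwise_disj (G # Gs) \<longleftrightarrow> (\<forall>H \<in> set Gs. disj G H) \<and> pairwise_disj Gs" (is "?L \<longleftrightarrow> ?R")
proof
  assume L: ?L
  have "disj G (Gs ! j)" if "j < length Gs" for j
    using L[unfolded pairwise_disj_def, rule_format, of 0 "Suc j"] that by simp
  moreover have "disj (Gs ! i) (Gs ! j)" if "i < length Gs" "j < length Gs" "i \<noteq> j" for i j
    using L[unfolded pairwise_disj_def, rule_format, of "Suc i" "Suc j"] that by simp
  ultimately show ?R unfolding pairwise_disj_def all_set_conv_all_nth by blast
next
  assume R: ?R
  have sym: "disj A B \<Longrightarrow> disj B A" for A B :: "'b ctx" unfolding disj_def by blast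
  show ?L unfolding pairwise_disj_def
  proof (intro allI impI)
    fix i j assume "i < length (G # Gs)" "j < length (G # Gs)" "i \<noteq> j"
    then show "disj ((G # Gs) ! i) ((G # Gs) ! j)"
      using R unfolding pairwise_disj_def all_set_conv_all_nth by (cases i; cases j) (auto intro: sym)
  qed
qed

lemma pairwise_disj_wf_ctx_sub:
  assumes "list_all2 (wf_ctx_sub bsub) Hs Gs" and "pairwise_disj Gs"
  shows "pairwise_disj Hs"
proof -
  have "length Hs = length Gs" using assms(1) by (rule list_all2_lengthD)
  moreover have "dom (Hs ! i) = dom (Gs ! i)" if "i < length Gs" for i
    using list_all2_nthD2[OF assms(1) that] ctx_sub_dom unfolding wf_ctx_sub_def by blast
  ultimately show ?thesis using assms(2) unfolding pairwise_disj_def disj_def by simp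
qed

lemma wf_ctx_sub_foldl_split:
  "wf_ctx_sub bsub \<Gamma>' (foldl (++) G0 Gs) \<Longrightarrow> pairwise_disj (G0 # Gs) \<Longrightarrow>
   \<exists>H0 Hs. \<Gamma>' = foldl (++) H0 Hs \<and> list_all2 (wf_ctx_sub bsub) (H0 # Hs) (G0 # Gs)"
proof (induction Gs arbitrary: G0 \<Gamma>')
  case Nil
  then show ?case by auto
next
  case (Cons G1 Gs)
  have "disj G0 G1" and disj_tail: "pairwise_disj ((G0 ++ G1) # Gs)"
    using Cons.prems(2) by (simp_all add: pairwise_disj_Cons disj_def Int_Un_distrib2)
  have "wf_ctx_sub bsub \<Gamma>' (foldl (++) (G0 ++ G1) Gs)" using Cons.prems(1) by simp
  from Cons.IH[OF this disj_tail] obtain H01 Hs where \<Gamma>': "\<Gamma>' = foldl (++) H01 Hs"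
    and sub: "list_all2 (wf_ctx_sub bsub) (H01 # Hs) ((G0 ++ G1) # Gs)"
    by blast
  from sub have "wf_ctx_sub bsub H01 (G0 ++ G1)" by simp
  then obtain H0 H1 where "H01 = H0 ++ H1" "wf_ctx_sub bsub H0 G0" "wf_ctx_sub bsub H1 G1"
    using \<open>disj G0 G1\<close> by (rule wf_ctx_sub_map_add_split)
  with \<Gamma>' sub have "\<Gamma>' = foldl (++) H0 (H1 # Hs)"
    and "list_all2 (wf_ctx_sub bsub) (H0 # H1 # Hs) (G0 # G1 # Gs)"
    by simp_all
  then show ?case by blast
qed

lemma end_ctx_wf_ctx_sub:
  assumes "transp bsub" and "wf_ctx_sub bsub \<Gamma>' \<Gamma>" and "end_ctx bsub \<Gamma>"
  shows "end_ctx bsub \<Gamma>'"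
  unfolding end_ctx_def
proof (intro allI impI)
  fix c S' assume S': "\<Gamma>' c = Some S'"
  then obtain S where S: "\<Gamma> c = Some S"
    using assms(2) ctx_sub_dom unfolding wf_ctx_sub_def by blast
  have sub: "subty bsub S' S" and wf: "wf_ty S'" "wf_ty S"
    using assms(2) S S' unfolding wf_ctx_sub_def ctx_sub_def wf_ty_ctx_def by blast+
  from assms(3) S have "(\<exists>B. S = TBase B) \<or> subty bsub S TEnd"
    unfolding end_ctx_def by blast
  then show "(\<exists>B. S' = TBase B) \<or> subty bsub S' TEnd"
  proof
    assume "\<exists>B. S = TBase B"
    then obtain B where "S = TBase B" by blast
    then show ?thesis using subty_TBaseD[OF wf(1)] sub by simp
  next
    assume "subty bsub S TEnd"
    then show ?thesis using subty_trans[OF assms(1) wf wf_ty_TEnd sub] by blast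
  qed
qed

lemma dtyp_wf_ctx_sub:
  assumes "transp bsub" and "dtyp bsub valty G d S" and "wf_ctx_sub bsub G' G" and "wf_ty S"
  shows "dtyp bsub valty G' d S"
proof (cases d)
  case (DVal v)
  then have "G = Map.empty" using assms(2) unfolding dtyp_def by simp
  then have "G' = Map.empty" using ctx_sub_empty assms(3) unfolding wf_ctx_sub_def by blast
  then show ?thesis using DVal assms(2) unfolding dtyp_def by simp
next
  case (DCh c)
  then obtain S0 where G: "G = [c \<mapsto> S0]" and S0: "subty bsub S0 S"
    using assms(2) unfolding dtyp_def by auto
  obtain S0' where G': "G' = [c \<mapsto> S0']" and S0': "subty bsub S0' S0"
    using ctx_sub_singleton assms(3) G unfolding wf_ctx_sub_def by blast
  have "wf_ty S0'" "wf_ty S0"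
    using assms(3) G G' unfolding wf_ctx_sub_def wf_ty_ctx_def by simp_all
  then have "subty bsub S0' S" using subty_trans[OF assms(1) _ _ assms(4) S0' S0] by blast
  then show ?thesis using DCh G' unfolding dtyp_def by auto
qed

section \<open>Narrowing of typing derivations\<close>

inductive_cases wf_proc_ParE: "wf_proc (Par P Q)"
inductive_cases wf_proc_SendE: "wf_proc (Send c q m d P)"
inductive_cases wf_proc_RecvE: "wf_proc (Recv c q bs)"
inductive_cases wf_proc_DefE: "wf_proc (Def X xs P Q)"
inductive_cases wf_proc_ResE: "wf_proc (Res s G P)"

lemma wf_pctx_upd:
  "wf_pctx \<Theta> \<Longrightarrow> \<forall>(x, S) \<in> set xs. wf_sort S \<Longrightarrow> wf_pctx (\<Theta>(X \<mapsto> map snd xs))"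
  unfolding wf_pctx_def by auto

lemma wf_ty_ctx_sctx: "\<forall>T \<in> ran G. wf_sess T \<Longrightarrow> wf_ty_ctx (sctx s G)"
  unfolding wf_ty_ctx_def sctx_def
  by (auto simp: ranI wf_sess_imp_wf_ty split: chan.splits if_splits)

lemma typed_Crashed_narrowing:
  assumes "transp bsub" and "end_ctx bsub \<Gamma>" and "CEp s p \<notin> dom \<Gamma>"
    and "wf_ctx_sub bsub \<Gamma>' (\<Gamma>(CEp s p \<mapsto> TStop))"
  shows "typed bsub valty safe \<Theta> \<Gamma>' (Crashed s p)"
proof -
  have "wf_ctx_sub bsub \<Gamma>' (\<Gamma> ++ [CEp s p \<mapsto> TStop])"
    using assms(4) by (metis map_add_empty map_add_upd)
  then obtain H S' where "\<Gamma>' = H ++ [CEp s p \<mapsto> S']" and H: "wf_ctx_sub bsub H \<Gamma>"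
    and "subty bsub S' TStop" and "wf_ty S'"
    using assms(3) by (rule wf_ctx_sub_extend_split)
  then have "\<Gamma>' = H(CEp s p \<mapsto> TStop)" using subty_TStopD[of S' bsub] by simp
  moreover have "CEp s p \<notin> dom H" using assms(3) ctx_sub_dom H unfolding wf_ctx_sub_def by blast
  moreover have "end_ctx bsub H" using end_ctx_wf_ctx_sub[OF assms(1) H assms(2)] .
  ultimately show ?thesis by (metis typed.t_crashed)
qed

lemma typed_Send_narrowing:
  assumes "reflp bsub" and "transp bsub"
    and sub: "subty bsub S1 (TInt q [(m, S, T)])" and wf_I: "wf_sess (TInt q [(m, S, T)])"
    and "dtyp bsub valty G2 d S" and "\<not> subty bsub S TEnd"
    and disj: "disj \<Gamma> [c \<mapsto> S1]" "disj \<Gamma> G2" "disj [c \<mapsto> S1] G2"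
    and IH: "\<And>H. wf_ctx_sub bsub H (\<Gamma>(c \<mapsto> T)) \<Longrightarrow> typed bsub valty safe \<Theta> H P"
    and "wf_ctx_sub bsub \<Gamma>' (\<Gamma> ++ [c \<mapsto> S1] ++ G2)"
  shows "typed bsub valty safe \<Theta> \<Gamma>' (Send c q m d P)"
proof -
  have "disj (\<Gamma> ++ [c \<mapsto> S1]) G2" using disj(2,3) unfolding disj_def by auto
  with assms(11) obtain H01 H2 where "\<Gamma>' = H01 ++ H2"
    and H01: "wf_ctx_sub bsub H01 (\<Gamma> ++ [c \<mapsto> S1])" and H2: "wf_ctx_sub bsub H2 G2"
    by (rule wf_ctx_sub_map_add_split)
  moreover have "c \<notin> dom \<Gamma>" using disj(1) unfolding disj_def by simp
  with H01 obtain H S1' where "H01 = H ++ [c \<mapsto> S1']" and H: "wf_ctx_sub bsub H \<Gamma>"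
    and "subty bsub S1' S1" "wf_ty S1'" "wf_ty S1"
    by (rule wf_ctx_sub_extend_split)
  ultimately have \<Gamma>': "\<Gamma>' = H ++ [c \<mapsto> S1'] ++ H2" by simp
  have wf_I': "wf_ty (TInt q [(m, S, T)])" using wf_I by (rule wf_sess_imp_wf_ty)
  then have "wf_ty S" "wf_ty T" using wf_ty_TIntD[of q "[(m, S, T)]" m S T] by simp_all
  have "subty bsub S1' (TInt q [(m, S, T)])"
    using subty_trans[OF assms(2) \<open>wf_ty S1'\<close> \<open>wf_ty S1\<close> wf_I'] \<open>subty bsub S1' S1\<close> sub .
  moreover have "dtyp bsub valty H2 d S"
    using dtyp_wf_ctx_sub[OF assms(2) assms(5) H2 \<open>wf_ty S\<close>] .
  moreover have "typed bsub valty safe \<Theta> (H(c \<mapsto> T)) P"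
    using IH wf_ctx_sub_upd[OF assms(1) H \<open>wf_ty T\<close>] .
  moreover have "dom H = dom \<Gamma>" "dom H2 = dom G2"
    using H H2 ctx_sub_dom unfolding wf_ctx_sub_def by blast+
  then have "disj H [c \<mapsto> S1']" "disj H H2" "disj [c \<mapsto> S1'] H2"
    using disj unfolding disj_def by auto
  ultimately show ?thesis using typed.t_send wf_I assms(6) \<Gamma>' by metis
qed

lemma typed_Recv_narrowing:
  assumes "reflp bsub" and "transp bsub"
    and sub: "subty bsub S1 (TExt q ts)" and wf_E: "wf_sess (TExt q ts)"
    and "fst ` set ts = fst ` set bs" and "c \<notin> dom \<Gamma>"
    and branches: "\<And>m y P S T. (m, y, P) \<in> set bs \<Longrightarrow> (m, S, T) \<in> set ts \<Longrightarrow>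
      CVar y \<notin> dom \<Gamma> \<and> CVar y \<noteq> c \<and>
      (\<forall>H. wf_ctx_sub bsub H (\<Gamma>(CVar y \<mapsto> S, c \<mapsto> T)) \<longrightarrow> typed bsub valty safe \<Theta> H P)"
    and "wf_ctx_sub bsub \<Gamma>' (\<Gamma> ++ [c \<mapsto> S1])"
  shows "typed bsub valty safe \<Theta> \<Gamma>' (Recv c q bs)"
proof -
  obtain H S1' where \<Gamma>': "\<Gamma>' = H ++ [c \<mapsto> S1']" and H: "wf_ctx_sub bsub H \<Gamma>"
    and "subty bsub S1' S1" "wf_ty S1'" "wf_ty S1"
    using assms(8,6) by (rule wf_ctx_sub_extend_split)
  have dom_H: "dom H = dom \<Gamma>" using H ctx_sub_dom unfolding wf_ctx_sub_def by blast
  have wf_E': "wf_ty (TExt q ts)" using wf_E by (rule wf_sess_imp_wf_ty)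
  have "subty bsub S1' (TExt q ts)"
    using subty_trans[OF assms(2) \<open>wf_ty S1'\<close> \<open>wf_ty S1\<close> wf_E'] \<open>subty bsub S1' S1\<close> sub .
  moreover have "c \<notin> dom H" using assms(6) dom_H by simp
  moreover have "\<forall>(m, y, P) \<in> set bs. \<forall>S T. (m, S, T) \<in> set ts \<longrightarrow>
      CVar y \<notin> dom H \<and> CVar y \<noteq> c \<and> typed bsub valty safe \<Theta> (H(CVar y \<mapsto> S, c \<mapsto> T)) P"
  proof clarify
    fix m y P S T assume branch: "(m, y, P) \<in> set bs" and label: "(m, S, T) \<in> set ts"
    have "wf_ty S" "wf_ty T" using wf_ty_TExtD[OF wf_E' label] by simp_all
    then have "wf_ctx_sub bsub (H(CVar y \<mapsto> S, c \<mapsto> T)) (\<Gamma>(CVar y \<mapsto> S, c \<mapsto> T))"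
      using wf_ctx_sub_upd[OF assms(1)] H by blast
    then show "CVar y \<notin> dom H \<and> CVar y \<noteq> c \<and> typed bsub valty safe \<Theta> (H(CVar y \<mapsto> S, c \<mapsto> T)) P"
      using branches[OF branch label] dom_H by blast
  qed
  ultimately show ?thesis unfolding \<Gamma>' by (rule typed.t_recv[OF _ wf_E assms(5)])
qed

lemma typed_Call_narrowing:
  assumes "transp bsub" and "wf_pctx \<Theta>" and "\<Theta> X = Some Ss"
    and "length ds = length Ss" and "length Gs = length Ss" and "end_ctx bsub G0"
    and args: "\<forall>i < length Ss. dtyp bsub valty (Gs ! i) (ds ! i) (Ss ! i) \<and> \<not> subty bsub (Ss ! i) TEnd"
    and "pairwise_disj (G0 # Gs)" and "wf_ctx_sub bsub \<Gamma>' (foldl (++) G0 Gs)"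
  shows "typed bsub valty safe \<Theta> \<Gamma>' (Call X ds)"
proof -
  obtain H0 Hs where \<Gamma>': "\<Gamma>' = foldl (++) H0 Hs"
    and sub: "list_all2 (wf_ctx_sub bsub) (H0 # Hs) (G0 # Gs)"
    using wf_ctx_sub_foldl_split[OF assms(9,8)] by blast
  have "length Hs = length Ss" using list_all2_lengthD[OF sub] assms(5) by simp
  moreover have "end_ctx bsub H0" using end_ctx_wf_ctx_sub[OF assms(1) _ assms(6)] sub by simp
  moreover have "dtyp bsub valty (Hs ! i) (ds ! i) (Ss ! i)" if "i < length Ss" for i
  proof -
    have "wf_ty (Ss ! i)"
      using assms(2,3) that nth_mem wf_sort_imp_wf_ty unfolding wf_pctx_def by blast
    moreover have "wf_ctx_sub bsub (Hs ! i) (Gs ! i)"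
      using sub that assms(5) by (simp add: list_all2_nthD2)
    ultimately show ?thesis using dtyp_wf_ctx_sub[OF assms(1)] args that by blast
  qed
  moreover have "pairwise_disj (H0 # Hs)" using pairwise_disj_wf_ctx_sub[OF sub assms(8)] .
  ultimately show ?thesis
    unfolding \<Gamma>' using args by (intro typed.t_call[where \<Theta> = \<Theta>, OF assms(3,4)]) auto
qed

(* wf_proc is needed only for Def, to keep the extended process context well formed. *)
lemma typed_narrowing:
  assumes "reflp bsub" and "transp bsub"
  shows "typed bsub valty safe \<Theta> \<Gamma> P \<Longrightarrow> wf_pctx \<Theta> \<Longrightarrow> wf_proc P \<Longrightarrow>
    wf_ctx_sub bsub \<Gamma>' \<Gamma> \<Longrightarrow> typed bsub valty safe \<Theta> \<Gamma>' P"
proof (induction arbitrary: \<Gamma>' rule: typed.induct)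
  case (t_nil \<Gamma> \<Theta>)
  then show ?case using end_ctx_wf_ctx_sub[OF assms(2)] by (blast intro: typed.t_nil)
next
  case (t_crashed \<Gamma> s p \<Theta>)
  then show ?case using typed_Crashed_narrowing[OF assms(2)] by blast
next
  case (t_par \<Theta> G1 P1 G2 P2)
  obtain H1 H2 where "\<Gamma>' = H1 ++ H2" "wf_ctx_sub bsub H1 G1" "wf_ctx_sub bsub H2 G2"
    using t_par.prems(3) t_par.hyps(3) by (rule wf_ctx_sub_map_add_split)
  moreover have "disj H1 H2" using t_par.hyps(3) \<open>wf_ctx_sub bsub H1 G1\<close> \<open>wf_ctx_sub bsub H2 G2\<close>
    unfolding wf_ctx_sub_def disj_def by (metis ctx_sub_dom)
  ultimately show ?case
    using t_par.IH t_par.prems(1,2) by (auto elim: wf_proc_ParE intro: typed.t_par)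
next
  case (t_send S1 q m S T G2 d \<Gamma> c \<Theta> P)
  have "wf_proc P" using t_send.prems(2) by (auto elim: wf_proc_SendE)
  then show ?case
    using typed_Send_narrowing[OF assms t_send.hyps(1-7) _ t_send.prems(3)] t_send.IH t_send.prems(1)
    by blast
next
  case (t_recv S1 q ts bs c \<Gamma> \<Theta>)
  have "CVar y \<notin> dom \<Gamma> \<and> CVar y \<noteq> c \<and>
      (\<forall>H. wf_ctx_sub bsub H (\<Gamma>(CVar y \<mapsto> S, c \<mapsto> T)) \<longrightarrow> typed bsub valty safe \<Theta> H P)"
    if branch: "(m, y, P) \<in> set bs" and label: "(m, S, T) \<in> set ts" for m y P S T
  proof -
    have "wf_proc P" using t_recv.prems(2) branch by (auto elim: wf_proc_RecvE)
    then show ?thesis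
      using bspec[OF t_recv.IH branch, unfolded prod.case, rule_format, OF label] t_recv.prems(1)
      by blast
  qed
  then show ?case by (rule typed_Recv_narrowing[OF assms t_recv.hyps(1-4) _ t_recv.prems(3)])
next
  case (t_def X \<Theta> xs P \<Gamma> Q)
  from t_def.prems(2) have "wf_pctx (\<Theta>(X \<mapsto> map snd xs))" and "wf_proc Q"
    by (blast elim: wf_proc_DefE intro: wf_pctx_upd[OF t_def.prems(1)])+
  then have "typed bsub valty safe (\<Theta>(X \<mapsto> map snd xs)) \<Gamma>' Q"
    using t_def.IH(2) t_def.prems(3) by blast
  then show ?case using typed.t_def t_def.hyps(1,2) by blast
next
  case (t_call \<Theta> X Ss ds Gs G0)
  then show ?case using typed_Call_narrowing[OF assms(2)] by blast
next
  case (t_res s G \<Gamma> \<Theta> P)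
  have "wf_ty_ctx (sctx s G)" using t_res.prems(2) by (auto elim: wf_proc_ResE intro: wf_ty_ctx_sctx)
  then have "typed bsub valty safe \<Theta> (\<Gamma>' ++ sctx s G) P"
    using t_res.IH t_res.prems wf_ctx_sub_map_add_right[OF assms(1)] by (auto elim: wf_proc_ResE)
  moreover have "\<forall>p. CEp s p \<notin> dom \<Gamma>'"
    using t_res.hyps(2) t_res.prems(3) ctx_sub_dom unfolding wf_ctx_sub_def by blast
  ultimately show ?case using typed.t_res t_res.hyps(1) by blast
qed

theorem mainTheorem4:
  fixes bsub :: "'b \<Rightarrow> 'b \<Rightarrow> bool"
    and valty :: "'v \<Rightarrow> 'b \<Rightarrow> bool"
    and safe :: "sess \<Rightarrow> 'b ctx \<Rightarrow> bool"
    and \<Theta> :: "'b pctx" and \<Gamma> \<Gamma>' :: "'b ctx" and P :: "('b, 'v) proc"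
  assumes "reflp bsub" and "transp bsub"
    and "wf_pctx \<Theta>" and "wf_ctx \<Gamma>" and "wf_ctx \<Gamma>'" and "wf_proc P"
    and "typed bsub valty safe \<Theta> \<Gamma> P"
    and "ctx_sub bsub \<Gamma>' \<Gamma>"
  shows "typed bsub valty safe \<Theta> \<Gamma>' P"
proof -
  have "wf_ctx_sub bsub \<Gamma>' \<Gamma>"
    using assms(4,5,8) wf_ctx_imp_wf_ty_ctx unfolding wf_ctx_sub_def by blast
  with typed_narrowing[OF assms(1,2)] assms(3,6,7) show ?thesis by blast
qed

end
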